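(* Given $\vartheta\in\mathbf{I}$, let $\zeta(\cdot)$ be the unique fluid model solution with $\zeta(0)=\vartheta$. For every $T,\varepsilon>0$ there exists $\kappa>0$ such that $\max_{1\le k\le K}\sup_{t\in[0,T]}\sup_{x,y\in\mathbb{R}_+}\zeta_k(t)(C^{\kappa}_{(x,y)})<\varepsilon$.
   Context: Let $K\in\mathbb{N}$, $\lambda_k,\mu_k\in(0,\infty)$, $\rho_k=\lambda_k/\mu_k$, $\rho=\sum_k\rho_k>1$; $\Gamma_k$ a continuous probability distribution on $(0,\infty)$ with finite mean, $G_k(x)=1-\Gamma_k([0,x])$. A workload fluid model solution is $w:[0,\infty)\to\mathbb{R}_+$ with $w(t)=w(0)+\sum_k\rho_k\int_0^tG_k(w(s))ds-t$; for each $w_0\ge0$ there is a unique one with $w(0)=w_0$ (taken as known). $\mathbf{M}_2$: finite nonnegative Borel measures on $\mathbb{R}_+^2$; $\mathbf{M}_2^K$ its product. For $\vartheta\in\mathbf{M}_2^K$: $\vartheta_+=\sum_k\vartheta_k$, $w_\vartheta=\sup\{x\ge0:\vartheta_+([x,\infty)\times\mathbb{R}_+)>0\}$. For Borel $B\subset\mathbb{R}_+^2$, $x\in\mathbb{R}_+^2$: $B_x=\{y\in\mathbb{R}_+^2:y-x\in B\}$, $B_t=B_{(t,t)}$; the $\kappa$-enlargement is $B^\kappa=\{z\in\mathbb{R}_+^2:\inf_{y\in B}\|z-y\|<\kappa\}$, and $B_x^\kappa$ means $(B_x)^\kappa$. $C=\mathbb{R}_+\times\{0\}\cup\{0\}\times\mathbb{R}_+$.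 $\mathbf{I}$: the set of $\vartheta\in\mathbf{M}_2^K$ with $\vartheta_+(C_x)=0$ for all $x\in\mathbb{R}_+^2$, $w_\vartheta<\infty$, $\max_kG_k(w_\vartheta-\varepsilon)>0$ for all $\varepsilon>0$. $\delta^+_x$: unit mass at $x$ if $x>0$, zero if $x=0$. A fluid model solution with initial measure $\vartheta\in\mathbf{I}$ is $\zeta:[0,\infty)\to\mathbf{M}_2^K$ with $\zeta(0)=\vartheta$ and $\zeta_k(t)(B)=\zeta_k(0)(B_t)+\lambda_k\int_0^t(\delta^+_{w(s)}\times\Gamma_k)(B_{t-s})ds$ for all $k$, Borel $B$, $t\ge0$, $w$ the workload fluid model solution with $w(0)=w_\vartheta$ (such $\zeta$ exists uniquely). *)

theory Defs
  imports "HOL-Probability.Probability"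
begin

definition Rp2 :: "(real \<times> real) set" where
  "Rp2 = {z. 0 \<le> fst z \<and> 0 \<le> snd z}"

text \<open>Elements of M_2: finite nonnegative Borel measures on R_+^2, represented as
  finite Borel measures on R^2 that put no mass outside R_+^2.\<close>
definition M2 :: "(real \<times> real) measure \<Rightarrow> bool" where
  "M2 m \<longleftrightarrow> sets m = sets borel \<and> finite_measure m \<and> emeasure m (UNIV - Rp2) = 0"

definition service_dist :: "real measure \<Rightarrow> bool" where
  "service_dist \<Gamma> \<longleftrightarrow> prob_space \<Gamma> \<and> sets \<Gamma> = sets borel
     \<and> emeasure \<Gamma> {..0} = 0 \<and> (\<forall>x. emeasure \<Gamma> {x} = 0)
     \<and> integrable \<Gamma> (\<lambda>x. x)"

definition Gbar :: "real measure \<Rightarrow> real \<Rightarrow> real" where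
  "Gbar \<Gamma> x = 1 - measure \<Gamma> {0..x}"

definition workload_sol ::
  "nat \<Rightarrow> (nat \<Rightarrow> real) \<Rightarrow> (nat \<Rightarrow> real) \<Rightarrow> (nat \<Rightarrow> real measure) \<Rightarrow> (real \<Rightarrow> real) \<Rightarrow> bool" where
  "workload_sol K lam mu \<Gamma> w \<longleftrightarrow>
     (\<forall>t\<ge>0. 0 \<le> w t) \<and>
     (\<forall>t\<ge>0. \<forall>k\<in>{1..K}. (\<lambda>s. Gbar (\<Gamma> k) (w s)) integrable_on {0..t}) \<and>
     (\<forall>t\<ge>0. w t = w 0 + (\<Sum>k\<in>{1..K}. (lam k / mu k) * integral {0..t} (\<lambda>s. Gbar (\<Gamma> k) (w s))) - t)"

definition mplus :: "nat \<Rightarrow> (nat \<Rightarrow> (real \<times> real) measure) \<Rightarrow> (real \<times> real) set \<Rightarrow> ennreal" where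
  "mplus K \<theta> A = (\<Sum>k\<in>{1..K}. emeasure (\<theta> k) A)"

definition wset :: "nat \<Rightarrow> (nat \<Rightarrow> (real \<times> real) measure) \<Rightarrow> real set" where
  "wset K \<theta> = {x. 0 \<le> x \<and> mplus K \<theta> ({x..} \<times> {0..}) > 0}"

text \<open>w_theta; the supremum of the empty set is taken to be 0 (the case theta_+ = 0).\<close>
definition wtheta :: "nat \<Rightarrow> (nat \<Rightarrow> (real \<times> real) measure) \<Rightarrow> real" where
  "wtheta K \<theta> = (if wset K \<theta> = {} then 0 else Sup (wset K \<theta>))"

definition shift :: "(real \<times> real) set \<Rightarrow> real \<times> real \<Rightarrow> (real \<times> real) set" where
  "shift B x = {y \<in> Rp2. y - x \<in> B}"

definition shiftt :: "(real \<times> real) set \<Rightarrow> real \<Rightarrow> (real \<times> real) set" where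
  "shiftt B t = shift B (t, t)"

definition enlarge :: "(real \<times> real) set \<Rightarrow> real \<Rightarrow> (real \<times> real) set" where
  "enlarge B \<kappa> = {z \<in> Rp2. (INF y\<in>B. norm (z - y)) < \<kappa>}"

definition Cset :: "(real \<times> real) set" where
  "Cset = (UNIV \<times> {0} \<inter> Rp2) \<union> ({0} \<times> UNIV \<inter> Rp2)"

definition Iset :: "nat \<Rightarrow> (nat \<Rightarrow> real measure) \<Rightarrow> (nat \<Rightarrow> (real \<times> real) measure) \<Rightarrow> bool" where
  "Iset K \<Gamma> \<theta> \<longleftrightarrow> (\<forall>k\<in>{1..K}. M2 (\<theta> k)) \<and>
     (\<forall>x\<in>Rp2. mplus K \<theta> (shift Cset x) = 0) \<and>
     bdd_above (wset K \<theta>) \<and>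
     (\<forall>\<epsilon>>0. \<exists>k\<in>{1..K}. Gbar (\<Gamma> k) (wtheta K \<theta> - \<epsilon>) > 0)"

text \<open>(delta^+_a x Gamma)(A): product of the unit mass at a (zero measure if a = 0) with Gamma.\<close>
definition dplus_prod :: "real \<Rightarrow> real measure \<Rightarrow> (real \<times> real) set \<Rightarrow> ennreal" where
  "dplus_prod a \<Gamma> A = (if a > 0 then emeasure \<Gamma> {y. (a, y) \<in> A} else 0)"

definition fluid_sol ::
  "nat \<Rightarrow> (nat \<Rightarrow> real) \<Rightarrow> (nat \<Rightarrow> real) \<Rightarrow> (nat \<Rightarrow> real measure)
   \<Rightarrow> (nat \<Rightarrow> (real \<times> real) measure) \<Rightarrow> (real \<Rightarrow> nat \<Rightarrow> (real \<times> real) measure) \<Rightarrow> bool" where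
  "fluid_sol K lam mu \<Gamma> \<theta> \<zeta> \<longleftrightarrow>
     (\<forall>t\<ge>0. \<forall>k\<in>{1..K}. M2 (\<zeta> t k)) \<and>
     (\<forall>k\<in>{1..K}. \<zeta> 0 k = \<theta> k) \<and>
     (\<exists>w. workload_sol K lam mu \<Gamma> w \<and> w 0 = wtheta K \<theta> \<and>
        (\<forall>k\<in>{1..K}. \<forall>B\<in>sets borel. B \<subseteq> Rp2 \<longrightarrow> (\<forall>t\<ge>0.
           emeasure (\<zeta> t k) B = emeasure (\<zeta> 0 k) (shiftt B t)
             + ennreal (lam k) * (\<integral>\<^sup>+ s. indicator {0..t} s * dplus_prod (w s) (\<Gamma> k) (shiftt B (t - s)) \<partial>lborel))))"

end

theory Submission
  imports Defs
begin

text \<open>The \<kappa>-enlargement of the corner set C_p lies in the union of two strips of width 2\<kappa>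
  around the lines through p. Mass of \<zeta>_k(t) comes either from the initial measure, transported
  along the diagonal, or from arrivals at times s \<le> t, placed at (w(s), v) with v distributed
  by \<Gamma>_k. Initial mass in the strips is small because \<vartheta> charges no horizontal or vertical line,
  so its marginals have no atoms. An arrival lands in the vertical strip only if w(s) + s is
  \<kappa>-close to a fixed value, which happens on a set of times of small Lebesgue measure since
  w(s) + s is continuous and strictly increasing; it lands in the horizontal strip only if v lies
  in a \<kappa>-ball, which has small \<Gamma>_k-probability since \<Gamma>_k is continuous. Finitely many atomless
  finite measures on the line give uniformly small mass to all balls of a common small radius.\<close>

section \<open>Atomless finite measures\<close>

lemma emeasure_decseq_eventually_less:
  assumes fin: "finite_measure M" and A: "range A \<subseteq> sets M" "decseq A"
    and lim: "emeasure M (\<Inter>n. A n) < e"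
  shows "\<exists>n. emeasure M (A n) < e"
proof -
  have "(\<lambda>n. emeasure M (A n)) \<longlonglongrightarrow> emeasure M (\<Inter>n. A n)"
    using A fin by (intro Lim_emeasure_decseq) (auto simp: finite_measure.emeasure_finite)
  then have "\<forall>\<^sub>F n in sequentially. emeasure M (A n) < e"
    using lim by (rule order_tendstoD(2))
  then show ?thesis by (auto dest: eventually_happens)
qed

lemma atomless_emeasure_ball_small:
  fixes M :: "'a::metric_space measure"
  assumes sets: "sets M = sets borel" and fin: "finite_measure M"
    and atom: "emeasure M {x} = 0" and e: "e > 0"
  shows "\<exists>\<delta>>0. emeasure M (ball x \<delta>) < e"
proof -
  have "(\<Inter>n. ball x (1 / Suc n)) = {x}"
  proof (intro equalityI subsetI)
    fix y assume y: "y \<in> (\<Inter>n. ball x (1 / Suc n))"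
    show "y \<in> {x}"
    proof (rule ccontr)
      assume "y \<notin> {x}"
      then obtain n where "1 / Suc n < dist x y"
        using reals_Archimedean[of "dist x y"] by (auto simp: inverse_eq_divide)
      with y show False using not_less_iff_gr_or_eq by fastforce
    qed
  qed auto
  then have "\<exists>n. emeasure M (ball x (1 / Suc n)) < e"
    using sets atom e
    by (intro emeasure_decseq_eventually_less[OF fin])
       (auto simp: decseq_def intro!: subset_ball frac_le)
  then show ?thesis
    by (metis of_nat_0_less_iff zero_less_Suc zero_less_divide_1_iff)
qed

lemma emeasure_outside_cball_small:
  fixes M :: "'a::metric_space measure"
  assumes sets: "sets M = sets borel" and fin: "finite_measure M" and e: "e > 0"
  shows "\<exists>r. emeasure M (- cball a r) < e"
proof -
  have "(\<Inter>n. - cball a (real n)) = {}"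
    using real_arch_simple by (auto simp: dist_commute) blast
  then have "\<exists>n. emeasure M (- cball a (real n)) < e"
    using sets e
    by (intro emeasure_decseq_eventually_less[OF fin])
       (auto simp: decseq_def intro!: subset_ball)
  then show ?thesis by blast
qed

lemma atomless_emeasure_ball_uniformly_small:
  fixes M :: "'a::heine_borel measure"
  assumes sets: "sets M = sets borel" and fin: "finite_measure M"
    and atomless: "\<And>x. emeasure M {x} = 0" and e: "e > 0"
  shows "\<exists>\<delta>>0. \<forall>x. emeasure M (ball x \<delta>) < e"
proof -
  fix a :: 'a
  obtain r where r: "emeasure M (- cball a r) < e"
    using emeasure_outside_cball_small[OF sets fin e] by blast
  define \<G> where "\<G> = {ball x \<delta> | x \<delta>. \<delta> > 0 \<and> emeasure M (ball x \<delta>) < e}"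
  have "cball a (r + 1) \<subseteq> \<Union>\<G>"
  proof
    fix x assume "x \<in> cball a (r + 1)"
    obtain \<delta> where "\<delta> > 0" "emeasure M (ball x \<delta>) < e"
      using atomless_emeasure_ball_small[OF sets fin atomless e] by blast
    then show "x \<in> \<Union>\<G>" unfolding \<G>_def by force
  qed
  then obtain \<eta> where \<eta>: "\<eta> > 0" "\<And>x. x \<in> cball a (r + 1) \<Longrightarrow> \<exists>G\<in>\<G>. ball x \<eta> \<subseteq> G"
    by (rule Heine_Borel_lemma[OF compact_cball]) (auto simp: \<G>_def)
  have "emeasure M (ball x (min \<eta> 1)) < e" for x
  proof (cases "x \<in> cball a (r + 1)")
    case True
    then obtain y \<delta> where "ball x \<eta> \<subseteq> ball y \<delta>" "emeasure M (ball y \<delta>) < e"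
      using \<eta>(2) unfolding \<G>_def by blast
    moreover have "emeasure M (ball x (min \<eta> 1)) \<le> emeasure M (ball y \<delta>)"
      using calculation(1) sets by (intro emeasure_mono) auto
    ultimately show ?thesis by order
  next
    case False
    have "ball x (min \<eta> 1) \<subseteq> - cball a r"
    proof
      fix y assume "y \<in> ball x (min \<eta> 1)"
      then have "dist x y < 1" by simp
      moreover have "dist a x \<le> dist a y + dist x y" by (rule dist_triangle2)
      ultimately show "y \<in> - cball a r" using False by simp
    qed
    then have "emeasure M (ball x (min \<eta> 1)) \<le> emeasure M (- cball a r)"
      using sets by (intro emeasure_mono) auto
    with r show ?thesis by order
  qed
  then show ?thesis using \<eta>(1) by (intro exI[of _ "min \<eta> 1"]) auto
qed

lemma atomless_family_emeasure_ball_uniformly_small: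
  fixes \<MM> :: "'a::heine_borel measure set"
  assumes "finite \<MM>"
    and "\<And>M. M \<in> \<MM> \<Longrightarrow> sets M = sets borel \<and> finite_measure M \<and> (\<forall>x. emeasure M {x} = 0)"
    and e: "e > 0"
  shows "\<exists>\<delta>>0. \<forall>M\<in>\<MM>. \<forall>x. emeasure M (ball x \<delta>) < e"
  using assms(1,2)
proof (induction rule: finite_induct)
  case empty
  show ?case by (intro exI[of _ 1]) auto
next
  case (insert N \<MM>)
  obtain \<delta>1 where \<delta>1: "\<delta>1 > 0" "\<forall>M\<in>\<MM>. \<forall>x. emeasure M (ball x \<delta>1) < e"
    using insert by auto
  obtain \<delta>2 where \<delta>2: "\<delta>2 > 0" "\<forall>x. emeasure N (ball x \<delta>2) < e"
    using atomless_emeasure_ball_uniformly_small[OF _ _ _ e] insert.prems by blast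
  have "emeasure M (ball x (min \<delta>1 \<delta>2)) < e" if M: "M \<in> insert N \<MM>" for M x
  proof -
    obtain \<delta> where "\<delta> \<in> {\<delta>1, \<delta>2}" "emeasure M (ball x \<delta>) < e"
      using M \<delta>1 \<delta>2 by auto
    moreover have "emeasure M (ball x (min \<delta>1 \<delta>2)) \<le> emeasure M (ball x \<delta>)"
      using calculation(1) M insert.prems by (intro emeasure_mono) auto
    ultimately show ?thesis by order
  qed
  then show ?case using \<delta>1 \<delta>2 by (intro exI[of _ "min \<delta>1 \<delta>2"]) auto
qed

section \<open>Lebesgue measure pushed forward by a continuous map\<close>

lemma continuous_on_Int_vimage_borel:
  fixes F :: "'a::topological_space \<Rightarrow> 'b::topological_space"
  assumes F: "continuous_on S F" and S: "S \<in> sets borel" and A: "A \<in> sets borel"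
  shows "S \<inter> F -` A \<in> sets borel"
proof -
  have "F -` A \<inter> space (restrict_space borel S) \<in> sets (restrict_space borel S)"
    using borel_measurable_continuous_on_restrict[OF F] A by (rule measurable_sets)
  then show ?thesis
    using S by (auto simp: sets_restrict_space_iff Int_commute)
qed

lemma continuous_on_borel_measurable_restrict_lborel:
  fixes F :: "real \<Rightarrow> real"
  assumes "continuous_on S F"
  shows "F \<in> borel_measurable (restrict_space lborel S)"
  using borel_measurable_continuous_on_restrict[OF assms]
  by (simp add: measurable_cong_sets[OF sets_restrict_space_cong[OF sets_lborel] refl])

lemma emeasure_distr_restrict_lborel:
  fixes F :: "real \<Rightarrow> real"
  assumes F: "continuous_on {a..b} F" and A: "A \<in> sets borel"
  shows "emeasure (distr (restrict_space lborel {a..b}) borel F) A = emeasure lborel ({a..b} \<inter> F -` A)"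
  using continuous_on_borel_measurable_restrict_lborel[OF F] A continuous_on_Int_vimage_borel[OF F _ A]
  by (simp add: emeasure_distr emeasure_restrict_space Int_commute)

lemma finite_measure_distr_restrict_lborel:
  fixes F :: "real \<Rightarrow> real"
  assumes "continuous_on {a..b} F"
  shows "finite_measure (distr (restrict_space lborel {a..b}) borel F)"
proof (rule finite_measure.finite_measure_distr)
  show "finite_measure (restrict_space lborel {a..b})"
    by (intro finite_measureI) (simp add: emeasure_restrict_space emeasure_lborel_Icc_eq)
qed (rule continuous_on_borel_measurable_restrict_lborel[OF assms])

lemma distr_restrict_lborel_atomless:
  fixes F :: "real \<Rightarrow> real"
  assumes F: "continuous_on {a..b} F" and strict: "strict_mono_on {a..b} F"
  shows "emeasure (distr (restrict_space lborel {a..b}) borel F) {c} = 0"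
proof -
  obtain x where "{a..b} \<inter> F -` {c} \<subseteq> {x}"
    using inj_onD[OF strict_mono_on_imp_inj_on[OF strict]] by blast
  then have "emeasure lborel ({a..b} \<inter> F -` {c}) \<le> emeasure lborel {x}"
    by (intro emeasure_mono) auto
  then show ?thesis
    by (simp add: emeasure_distr_restrict_lborel[OF F])
qed

section \<open>The workload\<close>

lemma Gbar_nonneg: "prob_space \<Gamma> \<Longrightarrow> 0 \<le> Gbar \<Gamma> x"
  by (simp add: Gbar_def prob_space.prob_le_1)

lemma Gbar_antimono:
  assumes "prob_space \<Gamma>" "sets \<Gamma> = sets borel" "x \<le> y"
  shows "Gbar \<Gamma> y \<le> Gbar \<Gamma> x"
proof -
  interpret prob_space \<Gamma> by fact
  have "measure \<Gamma> {0..x} \<le> measure \<Gamma> {0..y}"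
    using assms by (intro finite_measure_mono) auto
  then show ?thesis by (simp add: Gbar_def)
qed

context
  fixes K :: nat and lam mu :: "nat \<Rightarrow> real" and \<Gamma> :: "nat \<Rightarrow> real measure" and w :: "real \<Rightarrow> real"
  assumes ws: "workload_sol K lam mu \<Gamma> w"
    and lam_pos: "\<forall>k\<in>{1..K}. lam k > 0" and mu_pos: "\<forall>k\<in>{1..K}. mu k > 0"
    and Gam: "\<forall>k\<in>{1..K}. service_dist (\<Gamma> k)"
begin

lemma workload_sol_integrable:
  assumes "k \<in> {1..K}" "0 \<le> x"
  shows "(\<lambda>s. Gbar (\<Gamma> k) (w s)) integrable_on {x..y}"
proof (cases "x \<le> y")
  case True
  have "(\<lambda>s. Gbar (\<Gamma> k) (w s)) integrable_on {0..y}"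
    using ws assms True unfolding workload_sol_def by auto
  then show ?thesis by (rule integrable_on_subinterval) (use assms in auto)
qed (simp add: integrable_on_empty)

lemma workload_sol_Gbar:
  assumes "k \<in> {1..K}"
  shows "0 \<le> Gbar (\<Gamma> k) x" "x \<le> y \<Longrightarrow> Gbar (\<Gamma> k) y \<le> Gbar (\<Gamma> k) x"
  using Gam assms Gbar_nonneg Gbar_antimono by (auto simp: service_dist_def)

lemma workload_sol_integral_nonneg:
  assumes "k \<in> {1..K}" "0 \<le> x"
  shows "0 \<le> integral {x..y} (\<lambda>s. Gbar (\<Gamma> k) (w s))"
  using assms workload_sol_integrable workload_sol_Gbar(1) by (intro integral_nonneg) auto

lemma workload_sol_eq:
  assumes "0 \<le> t"
  shows "w t = w 0 + (\<Sum>k\<in>{1..K}. lam k / mu k * integral {0..t} (\<lambda>s. Gbar (\<Gamma> k) (w s))) - t"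
  using ws assms unfolding workload_sol_def by blast

lemma workload_sol_increment:
  assumes "0 \<le> x" "x \<le> y"
  shows "(w y + y) - (w x + x) = (\<Sum>k\<in>{1..K}. lam k / mu k * integral {x..y} (\<lambda>s. Gbar (\<Gamma> k) (w s)))"
proof -
  have "integral {0..y} (\<lambda>s. Gbar (\<Gamma> k) (w s))
      = integral {0..x} (\<lambda>s. Gbar (\<Gamma> k) (w s)) + integral {x..y} (\<lambda>s. Gbar (\<Gamma> k) (w s))"
    if "k \<in> {1..K}" for k
    using Henstock_Kurzweil_Integration.integral_combine[OF _ _ workload_sol_integrable[OF that order.refl]] assms
    by simp
  then have "(\<Sum>k\<in>{1..K}. lam k / mu k * integral {0..y} (\<lambda>s. Gbar (\<Gamma> k) (w s)))
      = (\<Sum>k\<in>{1..K}. lam k / mu k * integral {0..x} (\<lambda>s. Gbar (\<Gamma> k) (w s))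
          + lam k / mu k * integral {x..y} (\<lambda>s. Gbar (\<Gamma> k) (w s)))"
    by (intro sum.cong) (simp_all add: distrib_left)
  then show ?thesis
    using workload_sol_eq[of x] workload_sol_eq[of y] assms by (simp add: sum.distrib)
qed

lemma workload_sol_continuous: "continuous_on {0..T} w"
proof (rule continuous_on_eq)
  show "continuous_on {0..T}
      (\<lambda>t. w 0 + (\<Sum>k\<in>{1..K}. lam k / mu k * integral {0..t} (\<lambda>s. Gbar (\<Gamma> k) (w s))) - t)"
    by (intro continuous_on_diff continuous_on_add continuous_on_const continuous_on_id
        continuous_on_sum continuous_on_mult_left indefinite_integral_continuous_1
        workload_sol_integrable) auto
  show "w 0 + (\<Sum>k\<in>{1..K}. lam k / mu k * integral {0..t} (\<lambda>s. Gbar (\<Gamma> k) (w s))) - t = w t"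
    if "t \<in> {0..T}" for t
    using workload_sol_eq[of t] that by simp
qed

lemma workload_sol_mono:
  assumes "0 \<le> x" "x \<le> y"
  shows "w x + x \<le> w y + y"
proof -
  have "0 \<le> (\<Sum>k\<in>{1..K}. lam k / mu k * integral {x..y} (\<lambda>s. Gbar (\<Gamma> k) (w s)))"
    using lam_pos mu_pos workload_sol_integral_nonneg assms
    by (intro sum_nonneg mult_nonneg_nonneg) (auto simp: less_imp_le)
  then show ?thesis using workload_sol_increment[OF assms] by simp
qed

lemma workload_sol_Gbar_vanish:
  assumes "0 \<le> x" "x < y" "w x + x = w y + y" and k: "k \<in> {1..K}"
  shows "Gbar (\<Gamma> k) (w x) = 0"
proof -
  have "(\<Sum>k\<in>{1..K}. lam k / mu k * integral {x..y} (\<lambda>s. Gbar (\<Gamma> k) (w s))) = 0"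
    using workload_sol_increment[of x y] assms by simp
  moreover have "0 \<le> lam k / mu k * integral {x..y} (\<lambda>s. Gbar (\<Gamma> k) (w s))" if "k \<in> {1..K}" for k
    using lam_pos mu_pos workload_sol_integral_nonneg that assms by (simp add: less_imp_le)
  ultimately have "lam k / mu k * integral {x..y} (\<lambda>s. Gbar (\<Gamma> k) (w s)) = 0"
    using k by (metis (no_types, lifting) finite_atLeastAtMost sum_nonneg_eq_0_iff)
  moreover have "lam k / mu k > 0"
    using lam_pos mu_pos k by simp
  ultimately have int0: "integral {x..y} (\<lambda>s. Gbar (\<Gamma> k) (w s)) = 0"
    by (metis mult_eq_0_iff less_irrefl)
  have "Gbar (\<Gamma> k) (w x) \<le> Gbar (\<Gamma> k) (w s)" if "s \<in> {x..y}" for s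
  proof (rule workload_sol_Gbar(2)[OF k])
    show "w s \<le> w x" using workload_sol_mono[of s y] that assms by simp
  qed
  then have "integral {x..y} (\<lambda>_. Gbar (\<Gamma> k) (w x)) \<le> integral {x..y} (\<lambda>s. Gbar (\<Gamma> k) (w s))"
    using workload_sol_integrable[OF k] assms by (intro integral_le) auto
  then have "(y - x) * Gbar (\<Gamma> k) (w x) \<le> 0"
    using int0 assms by simp
  then show ?thesis
    using workload_sol_Gbar(1)[OF k, of "w x"] assms by (simp add: mult_le_0_iff)
qed

lemma workload_sol_flat_above:
  assumes vanish: "\<And>k x. k \<in> {1..K} \<Longrightarrow> c \<le> x \<Longrightarrow> Gbar (\<Gamma> k) x = 0"
    and "0 \<le> x" "x \<le> y" and above: "\<And>s. s \<in> {x..y} \<Longrightarrow> c \<le> w s"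
  shows "w x + x = w y + y"
proof -
  have "integral {x..y} (\<lambda>s. Gbar (\<Gamma> k) (w s)) = integral {x..y} (\<lambda>_. 0)" if "k \<in> {1..K}" for k
    using vanish[OF that] above by (intro integral_cong) auto
  then show ?thesis
    using workload_sol_increment[of x y] assms by simp
qed

text \<open>Above level c the workload decreases at unit rate. At the last time s1 \<le> a with
  w s1 \<le> c, continuity makes w + id constant on [s1, a], so w s1 would exceed c.\<close>

lemma workload_sol_stays_below_exhausted_level:
  assumes vanish: "\<And>k x. k \<in> {1..K} \<Longrightarrow> c \<le> x \<Longrightarrow> Gbar (\<Gamma> k) x = 0"
    and "w 0 \<le> c" and "0 \<le> a"
  shows "w a \<le> c"
proof (rule ccontr)
  assume "\<not> w a \<le> c"
  define D where "D = {0..a} \<inter> w -` {..c}"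
  have "closed D"
    unfolding D_def using workload_sol_continuous by (intro continuous_closed_preimage) auto
  moreover have "0 \<in> D" "bdd_above D"
    using assms by (auto simp: D_def intro: bdd_aboveI[of _ a])
  ultimately have "Sup D \<in> D"
    using closed_contains_Sup by blast
  define s1 where "s1 = Sup D"
  have s1: "0 \<le> s1" "s1 < a" "w s1 \<le> c"
    using \<open>Sup D \<in> D\<close> \<open>\<not> w a \<le> c\<close> by (auto simp: D_def s1_def less_le)
  have flat_after: "w r + r = w a + a" if "r \<in> {s1<..a}" for r
  proof (rule workload_sol_flat_above[OF vanish])
    fix s assume "s \<in> {r..a}"
    then have "s \<notin> D"
      using that cSup_upper[OF _ \<open>bdd_above D\<close>, of s] by (auto simp: s1_def)
    then show "c \<le> w s"
      using \<open>s \<in> {r..a}\<close> s1 that by (auto simp: D_def)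
  qed (use that s1 in auto)
  have "{s1<..a} \<subseteq> {s1..a} \<inter> (\<lambda>s. w s + s) -` {w a + a}"
  proof
    fix r assume "r \<in> {s1<..a}"
    then show "r \<in> {s1..a} \<inter> (\<lambda>s. w s + s) -` {w a + a}"
      using flat_after[of r] by simp
  qed
  moreover have "closed ({s1..a} \<inter> (\<lambda>s. w s + s) -` {w a + a})"
    using workload_sol_continuous[of a] s1
    by (intro continuous_closed_preimage continuous_intros) (auto intro: continuous_on_subset)
  ultimately have "closure {s1<..a} \<subseteq> {s1..a} \<inter> (\<lambda>s. w s + s) -` {w a + a}"
    by (rule closure_minimal)
  moreover have "s1 \<in> closure {s1<..a}"
    using \<open>s1 < a\<close> by simp
  ultimately have "w s1 + s1 = w a + a"
    by blast
  then show False
    using s1 \<open>\<not> w a \<le> c\<close> by simp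
qed

text \<open>A flat piece of w + id exhausts all service distributions above the level w m it passes
  through, while the busy condition on the initial workload keeps w 0 below that level.\<close>

lemma workload_sol_strict_mono:
  assumes busy: "\<forall>\<epsilon>>0. \<exists>k\<in>{1..K}. Gbar (\<Gamma> k) (w 0 - \<epsilon>) > 0"
  shows "strict_mono_on {0..} (\<lambda>s. w s + s)"
proof (rule strict_mono_onI)
  fix a b :: real assume ab: "a \<in> {0..}" "b \<in> {0..}" "a < b"
  show "w a + a < w b + b"
  proof (rule ccontr)
    assume "\<not> w a + a < w b + b"
    then have flat: "w a + a = w b + b"
      using workload_sol_mono[of a b] ab by simp
    define m where "m = (a + b) / 2"
    have m: "a < m" "m < b" using ab by (simp_all add: m_def)
    have "w m + m = w b + b"
      using workload_sol_mono[of a m] workload_sol_mono[of m b] flat m ab by simp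
    then have vanish: "Gbar (\<Gamma> k) x = 0" if "k \<in> {1..K}" "w m \<le> x" for k x
      using workload_sol_Gbar_vanish[of m b k] workload_sol_Gbar(2)[OF that]
        workload_sol_Gbar(1)[OF that(1), of x] that(1) m ab
      by simp
    have "w 0 \<le> w m"
    proof (rule ccontr)
      assume "\<not> w 0 \<le> w m"
      then obtain k where "k \<in> {1..K}" "Gbar (\<Gamma> k) (w 0 - (w 0 - w m)) > 0"
        using busy by (metis diff_gt_0_iff_gt not_le)
      then show False using vanish by simp
    qed
    have "w a \<le> w m"
    proof (rule workload_sol_stays_below_exhausted_level)
      show "Gbar (\<Gamma> k) x = 0" if "k \<in> {1..K}" "w m \<le> x" for k x
        using vanish[OF that] .
    qed (use \<open>w 0 \<le> w m\<close> ab in auto)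
    then show False
      using flat \<open>w m + m = w b + b\<close> m by linarith
  qed
qed

end

section \<open>Strips around the corner sets\<close>

definition cross_nbhd :: "real \<times> real \<Rightarrow> real \<Rightarrow> (real \<times> real) set" where
  "cross_nbhd p \<kappa> = Rp2 \<inter> (fst -` ball (fst p) \<kappa> \<union> snd -` ball (snd p) \<kappa>)"

lemma borel_measurable_fst_real:
  assumes "sets m = sets borel"
  shows "(fst :: real \<times> real \<Rightarrow> real) \<in> borel_measurable m"
  using borel_measurable_continuous_onI[OF continuous_on_fst[OF continuous_on_id]]
  by (simp add: measurable_cong_sets[OF assms refl])

lemma borel_measurable_snd_real:
  assumes "sets m = sets borel"
  shows "(snd :: real \<times> real \<Rightarrow> real) \<in> borel_measurable m"
  using borel_measurable_continuous_onI[OF continuous_on_snd[OF continuous_on_id]]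
  by (simp add: measurable_cong_sets[OF assms refl])

lemma fst_vimage_borel: "A \<in> sets borel \<Longrightarrow> fst -` A \<in> sets (borel :: (real \<times> real) measure)"
  using measurable_sets[OF borel_measurable_fst_real[OF refl]] by simp

lemma snd_vimage_borel: "A \<in> sets borel \<Longrightarrow> snd -` A \<in> sets (borel :: (real \<times> real) measure)"
  using measurable_sets[OF borel_measurable_snd_real[OF refl]] by simp

lemma Rp2_borel: "Rp2 \<in> sets borel"
proof -
  have "Rp2 = fst -` {0..} \<inter> snd -` {0..}"
    by (auto simp: Rp2_def)
  then show ?thesis
    using fst_vimage_borel[OF atLeast_borel] snd_vimage_borel[OF atLeast_borel] by (metis sets.Int)
qed

lemma shift_Cset_eq:
  "shift Cset p = Rp2 \<inter> (snd -` {snd p} \<inter> fst -` {fst p..} \<union> fst -` {fst p} \<inter> snd -` {snd p..})"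
  by (cases p) (auto simp: shift_def Cset_def Rp2_def)

lemma shift_Cset_borel: "shift Cset p \<in> sets borel"
  unfolding shift_Cset_eq using Rp2_borel fst_vimage_borel snd_vimage_borel by simp

lemma cross_nbhd_borel: "cross_nbhd p \<kappa> \<in> sets borel"
  unfolding cross_nbhd_def using Rp2_borel fst_vimage_borel snd_vimage_borel by simp

lemma enlarge_shift_Cset_subset:
  assumes "p \<in> Rp2"
  shows "enlarge (shift Cset p) \<kappa> \<subseteq> cross_nbhd p \<kappa>"
proof
  fix z assume z: "z \<in> enlarge (shift Cset p) \<kappa>"
  have "p \<in> shift Cset p"
    using assms by (simp add: shift_Cset_eq)
  moreover have "bdd_below ((\<lambda>y. norm (z - y)) ` shift Cset p)"
    by (rule bdd_belowI[of _ 0]) auto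
  ultimately have "\<exists>y\<in>shift Cset p. norm (z - y) < \<kappa>"
    using z cINF_less_iff[of "shift Cset p" "\<lambda>y. norm (z - y)" \<kappa>] by (auto simp: enlarge_def)
  then obtain y where y: "y \<in> shift Cset p" "norm (z - y) < \<kappa>" ..
  have "\<bar>fst z - fst y\<bar> < \<kappa>" "\<bar>snd z - snd y\<bar> < \<kappa>"
    using y(2) dist_fst_le[of z y] dist_snd_le[of z y] by (simp_all add: dist_norm dist_real_def)
  moreover have "snd y = snd p \<or> fst y = fst p"
    using y(1) by (auto simp: shift_Cset_eq)
  ultimately show "z \<in> cross_nbhd p \<kappa>"
    using z by (auto simp: cross_nbhd_def enlarge_def dist_real_def)
qed

lemma emeasure_shiftt_cross_nbhd_le:
  fixes m :: "(real \<times> real) measure"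
  assumes sets: "sets m = sets borel"
  shows "emeasure m (shiftt (cross_nbhd p \<kappa>) t)
    \<le> emeasure (distr m borel fst) (ball (fst p + t) \<kappa>) + emeasure (distr m borel snd) (ball (snd p + t) \<kappa>)"
proof -
  have sp: "space m = UNIV"
    using sets_eq_imp_space_eq[OF sets] by simp
  have "shiftt (cross_nbhd p \<kappa>) t \<subseteq> fst -` ball (fst p + t) \<kappa> \<union> snd -` ball (snd p + t) \<kappa>"
    by (auto simp: shiftt_def shift_def cross_nbhd_def dist_real_def)
  then have "emeasure m (shiftt (cross_nbhd p \<kappa>) t)
      \<le> emeasure m (fst -` ball (fst p + t) \<kappa> \<union> snd -` ball (snd p + t) \<kappa>)"
    using sets fst_vimage_borel snd_vimage_borel by (intro emeasure_mono) auto
  also have "\<dots> \<le> emeasure m (fst -` ball (fst p + t) \<kappa>) + emeasure m (snd -` ball (snd p + t) \<kappa>)"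
    using sets fst_vimage_borel snd_vimage_borel by (intro emeasure_subadditive) auto
  also have "\<dots> = emeasure (distr m borel fst) (ball (fst p + t) \<kappa>) + emeasure (distr m borel snd) (ball (snd p + t) \<kappa>)"
    using sets sp by (simp add: emeasure_distr borel_measurable_fst_real borel_measurable_snd_real)
  finally show ?thesis .
qed

lemma M2_marginals_finite_atomless:
  fixes m :: "(real \<times> real) measure"
  assumes M2: "M2 m" and null: "\<And>x. x \<in> Rp2 \<Longrightarrow> emeasure m (shift Cset x) = 0"
  shows "finite_measure (distr m borel fst)" "finite_measure (distr m borel snd)"
    "emeasure (distr m borel fst) {c} = 0" "emeasure (distr m borel snd) {c} = 0"
proof -
  have sets: "sets m = sets borel" and out: "emeasure m (- Rp2) = 0"
    using M2 by (auto simp: M2_def Compl_eq_Diff_UNIV)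
  show "finite_measure (distr m borel fst)" "finite_measure (distr m borel snd)"
    using M2 sets unfolding M2_def
    by (auto intro: finite_measure.finite_measure_distr borel_measurable_fst_real borel_measurable_snd_real)
  have sp: "space m = UNIV"
    using sets_eq_imp_space_eq[OF sets] by simp
  have null_out: "emeasure m A = 0" if "A \<in> sets borel" "A \<subseteq> shift Cset x \<union> - Rp2" "x \<in> Rp2" for A x
  proof -
    have "emeasure m A \<le> emeasure m (shift Cset x \<union> - Rp2)"
      using that sets shift_Cset_borel Rp2_borel by (intro emeasure_mono) auto
    also have "\<dots> \<le> emeasure m (shift Cset x) + emeasure m (- Rp2)"
      using sets shift_Cset_borel Rp2_borel by (intro emeasure_subadditive) auto
    finally show ?thesis
      using null[OF that(3)] out by simp
  qed
  have "emeasure m (fst -` {c}) = 0"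
    by (rule null_out[of _ "(\<bar>c\<bar>, 0)"]) (auto simp: fst_vimage_borel shift_Cset_eq Rp2_def)
  moreover have "emeasure m (snd -` {c}) = 0"
    by (rule null_out[of _ "(0, \<bar>c\<bar>)"]) (auto simp: snd_vimage_borel shift_Cset_eq Rp2_def)
  ultimately show "emeasure (distr m borel fst) {c} = 0" "emeasure (distr m borel snd) {c} = 0"
    using sp sets by (simp_all add: emeasure_distr borel_measurable_fst_real borel_measurable_snd_real)
qed

section \<open>Fluid model solutions\<close>

lemma dplus_prod_le_1: "prob_space \<Gamma> \<Longrightarrow> dplus_prod a \<Gamma> A \<le> 1"
  by (simp add: dplus_prod_def prob_space.emeasure_le_1)

lemma arrival_integral_cross_nbhd_le:
  fixes w :: "real \<Rightarrow> real" and \<delta> :: ennreal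
  assumes \<Gamma>: "prob_space \<Gamma>" "sets \<Gamma> = sets borel"
    and small: "\<And>c. emeasure \<Gamma> (ball c \<kappa>) \<le> \<delta>"
    and w: "continuous_on {0..T} w" and t: "0 \<le> t" "t \<le> T"
  shows "(\<integral>\<^sup>+ s. indicator {0..t} s * dplus_prod (w s) \<Gamma> (shiftt (cross_nbhd p \<kappa>) (t - s)) \<partial>lborel)
    \<le> emeasure lborel ({0..T} \<inter> (\<lambda>s. w s + s) -` ball (fst p + t) \<kappa>) + \<delta> * ennreal T"
proof -
  define A where "A = {0..T} \<inter> (\<lambda>s. w s + s) -` ball (fst p + t) \<kappa>"
  have A: "A \<in> sets borel"
    unfolding A_def using w by (intro continuous_on_Int_vimage_borel continuous_intros) auto
  have "indicator {0..t} s * dplus_prod (w s) \<Gamma> (shiftt (cross_nbhd p \<kappa>) (t - s))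
      \<le> indicator A s + \<delta> * indicator {0..T} s" for s
  proof (cases "s \<in> {0..t} \<and> 0 < w s \<and> s \<notin> A")
    case True
    then have "{y. (w s, y) \<in> shiftt (cross_nbhd p \<kappa>) (t - s)} \<subseteq> ball (snd p + (t - s)) \<kappa>"
      using t by (auto simp: A_def shiftt_def shift_def cross_nbhd_def dist_real_def)
    then have "dplus_prod (w s) \<Gamma> (shiftt (cross_nbhd p \<kappa>) (t - s)) \<le> emeasure \<Gamma> (ball (snd p + (t - s)) \<kappa>)"
      using True \<Gamma>(2) by (auto simp: dplus_prod_def intro!: emeasure_mono)
    also have "\<dots> \<le> \<delta>" by (rule small)
    finally show ?thesis
      using True t by (simp add: add_increasing)
  next
    case False
    then consider "s \<notin> {0..t}" | "w s \<le> 0" | "s \<in> A"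
      by fastforce
    then show ?thesis
    proof cases
      case 3
      then show ?thesis
        using dplus_prod_le_1[OF \<Gamma>(1)] by (cases "s \<in> {0..t}") (auto intro: add_increasing2)
    qed (simp_all add: dplus_prod_def)
  qed
  then have "(\<integral>\<^sup>+ s. indicator {0..t} s * dplus_prod (w s) \<Gamma> (shiftt (cross_nbhd p \<kappa>) (t - s)) \<partial>lborel)
      \<le> (\<integral>\<^sup>+ s. indicator A s + \<delta> * indicator {0..T} s \<partial>lborel)"
    by (rule nn_integral_mono)
  also have "\<dots> = emeasure lborel A + \<delta> * ennreal T"
    using A t by (simp add: nn_integral_add nn_integral_cmult_indicator)
  finally show ?thesis
    unfolding A_def .
qed

lemma fluid_measure_enlarged_corner_le:
  fixes \<zeta> \<theta> :: "(real \<times> real) measure" and w :: "real \<Rightarrow> real" and \<delta> l :: real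
  assumes evolution: "\<And>B. B \<in> sets borel \<Longrightarrow> B \<subseteq> Rp2 \<Longrightarrow> emeasure \<zeta> B = emeasure \<theta> (shiftt B t)
        + ennreal l * (\<integral>\<^sup>+ s. indicator {0..t} s * dplus_prod (w s) \<Gamma> (shiftt B (t - s)) \<partial>lborel)"
    and sets: "sets \<zeta> = sets borel" "sets \<theta> = sets borel"
    and \<Gamma>: "prob_space \<Gamma>" "sets \<Gamma> = sets borel"
    and w: "continuous_on {0..T} w" and t: "0 \<le> t" "t \<le> T" and p: "p \<in> Rp2"
    and l: "0 \<le> l" and \<delta>: "0 \<le> \<delta>"
    and small_fst: "\<And>c. emeasure (distr \<theta> borel fst) (ball c \<kappa>) \<le> \<delta>"
    and small_snd: "\<And>c. emeasure (distr \<theta> borel snd) (ball c \<kappa>) \<le> \<delta>"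
    and small_service: "\<And>c. emeasure \<Gamma> (ball c \<kappa>) \<le> \<delta>"
    and small_workload: "\<And>c. emeasure lborel ({0..T} \<inter> (\<lambda>s. w s + s) -` ball c \<kappa>) \<le> \<delta>"
  shows "emeasure \<zeta> (enlarge (shift Cset p) \<kappa>) \<le> ennreal (2 * \<delta> + l * (\<delta> + \<delta> * T))"
proof -
  have "emeasure \<zeta> (enlarge (shift Cset p) \<kappa>) \<le> emeasure \<zeta> (cross_nbhd p \<kappa>)"
    using enlarge_shift_Cset_subset[OF p] sets cross_nbhd_borel by (intro emeasure_mono) auto
  also have "\<dots> = emeasure \<theta> (shiftt (cross_nbhd p \<kappa>) t)
      + ennreal l * (\<integral>\<^sup>+ s. indicator {0..t} s * dplus_prod (w s) \<Gamma> (shiftt (cross_nbhd p \<kappa>) (t - s)) \<partial>lborel)"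
    using cross_nbhd_borel by (rule evolution) (simp add: cross_nbhd_def)
  also have "\<dots> \<le> (ennreal \<delta> + ennreal \<delta>) + ennreal l * (ennreal \<delta> + ennreal \<delta> * ennreal T)"
  proof (intro add_mono mult_left_mono order.refl)
    show "emeasure \<theta> (shiftt (cross_nbhd p \<kappa>) t) \<le> ennreal \<delta> + ennreal \<delta>"
      using emeasure_shiftt_cross_nbhd_le[OF sets(2)] small_fst small_snd by (rule order.trans[OF _ add_mono])
    show "(\<integral>\<^sup>+ s. indicator {0..t} s * dplus_prod (w s) \<Gamma> (shiftt (cross_nbhd p \<kappa>) (t - s)) \<partial>lborel)
        \<le> ennreal \<delta> + ennreal \<delta> * ennreal T"
      using arrival_integral_cross_nbhd_le[OF \<Gamma> small_service w t] small_workload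
      by (rule order.trans[OF _ add_mono]) simp
  qed simp
  also have "\<dots> = ennreal (2 * \<delta> + l * (\<delta> + \<delta> * T))"
    using l \<delta> order.trans[OF t]
    by (simp only: ennreal_plus[symmetric] ennreal_mult'[symmetric] mult_nonneg_nonneg add_nonneg_nonneg
        mult_2)
  finally show ?thesis .
qed

lemma mplus_eq_0_iff: "mplus K \<theta> A = 0 \<longleftrightarrow> (\<forall>k\<in>{1..K}. emeasure (\<theta> k) A = 0)"
  by (simp add: mplus_def)

lemma service_dist_atomless:
  assumes "service_dist \<Gamma>"
  shows "prob_space \<Gamma>" "sets \<Gamma> = sets borel" "finite_measure \<Gamma>" "emeasure \<Gamma> {c} = 0"
  using assms prob_space.finite_measure by (auto simp: service_dist_def)

lemma fluid_sol_enlarged_corner_uniformly_small: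
  assumes lam_pos: "\<forall>k\<in>{1..K}. lam k > 0" and mu_pos: "\<forall>k\<in>{1..K}. mu k > 0"
    and Gam: "\<forall>k\<in>{1..K}. service_dist (\<Gamma> k)"
    and init: "Iset K \<Gamma> \<theta>" and sol: "fluid_sol K lam mu \<Gamma> \<theta> \<zeta>"
    and T: "0 \<le> T" and \<delta>: "0 < \<delta>"
  shows "\<exists>\<kappa>>0. \<forall>k\<in>{1..K}. \<forall>t\<in>{0..T}. \<forall>p\<in>Rp2.
    emeasure (\<zeta> t k) (enlarge (shift Cset p) \<kappa>) \<le> ennreal (2 * \<delta> + lam k * (\<delta> + \<delta> * T))"
proof -
  obtain w where ws: "workload_sol K lam mu \<Gamma> w" and w0: "w 0 = wtheta K \<theta>"
    and evolution: "\<forall>k\<in>{1..K}. \<forall>B\<in>sets borel. B \<subseteq> Rp2 \<longrightarrow> (\<forall>t\<ge>0.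
           emeasure (\<zeta> t k) B = emeasure (\<zeta> 0 k) (shiftt B t)
             + ennreal (lam k) * (\<integral>\<^sup>+ s. indicator {0..t} s * dplus_prod (w s) (\<Gamma> k) (shiftt B (t - s)) \<partial>lborel))"
    and \<zeta>0: "\<forall>k\<in>{1..K}. \<zeta> 0 k = \<theta> k" and \<zeta>M2: "\<forall>t\<ge>0. \<forall>k\<in>{1..K}. M2 (\<zeta> t k)"
    using sol unfolding fluid_sol_def by blast
  have \<theta>M2: "\<And>k. k \<in> {1..K} \<Longrightarrow> M2 (\<theta> k)"
    and \<theta>null: "\<And>k x. k \<in> {1..K} \<Longrightarrow> x \<in> Rp2 \<Longrightarrow> emeasure (\<theta> k) (shift Cset x) = 0"
    and busy: "\<forall>\<epsilon>>0. \<exists>k\<in>{1..K}. Gbar (\<Gamma> k) (w 0 - \<epsilon>) > 0"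
    using init w0 by (auto simp: Iset_def mplus_eq_0_iff)
  have w: "continuous_on {0..T} w" "strict_mono_on {0..T} (\<lambda>s. w s + s)"
    using workload_sol_continuous[OF ws lam_pos mu_pos Gam]
      monotone_on_subset[OF workload_sol_strict_mono[OF ws lam_pos mu_pos Gam busy]]
    by auto
  have wF: "continuous_on {0..T} (\<lambda>s. w s + s)"
    using w(1) by (intro continuous_intros)
  define \<nu> where "\<nu> = distr (restrict_space lborel {0..T}) borel (\<lambda>s. w s + s)"
  define \<MM> where "\<MM> = insert \<nu> ((\<lambda>k. distr (\<theta> k) borel fst) ` {1..K}
      \<union> (\<lambda>k. distr (\<theta> k) borel snd) ` {1..K} \<union> \<Gamma> ` {1..K})"
  have "sets M = sets borel \<and> finite_measure M \<and> (\<forall>x. emeasure M {x} = 0)" if "M \<in> \<MM>" for M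
    using that unfolding \<MM>_def
  proof (elim insertE UnE imageE)
    assume "M = \<nu>"
    then show ?thesis
      using wF w(2) by (simp add: \<nu>_def finite_measure_distr_restrict_lborel distr_restrict_lborel_atomless)
  next
    fix k assume "M = distr (\<theta> k) borel fst" "k \<in> {1..K}"
    then show ?thesis
      using M2_marginals_finite_atomless[OF \<theta>M2 \<theta>null] by simp
  next
    fix k assume "M = distr (\<theta> k) borel snd" "k \<in> {1..K}"
    then show ?thesis
      using M2_marginals_finite_atomless[OF \<theta>M2 \<theta>null] by simp
  next
    fix k assume "M = \<Gamma> k" "k \<in> {1..K}"
    then show ?thesis
      using service_dist_atomless Gam by simp
  qed
  then obtain \<kappa> where \<kappa>: "\<kappa> > 0" "\<forall>M\<in>\<MM>. \<forall>x. emeasure M (ball x \<kappa>) < ennreal \<delta>"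
    using atomless_family_emeasure_ball_uniformly_small[of \<MM> "ennreal \<delta>"] \<delta> by (auto simp: \<MM>_def)
  then have small: "\<And>M c. M \<in> \<MM> \<Longrightarrow> emeasure M (ball c \<kappa>) \<le> ennreal \<delta>"
    by (auto intro: less_imp_le)
  have "emeasure (\<zeta> t k) (enlarge (shift Cset p) \<kappa>) \<le> ennreal (2 * \<delta> + lam k * (\<delta> + \<delta> * T))"
    if k: "k \<in> {1..K}" and t: "t \<in> {0..T}" and p: "p \<in> Rp2" for k t p
  proof (rule fluid_measure_enlarged_corner_le[where \<theta>="\<theta> k" and \<Gamma>="\<Gamma> k" and w=w and t=t])
    show "emeasure (\<zeta> t k) B = emeasure (\<theta> k) (shiftt B t)
        + ennreal (lam k) * (\<integral>\<^sup>+ s. indicator {0..t} s * dplus_prod (w s) (\<Gamma> k) (shiftt B (t - s)) \<partial>lborel)"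
      if "B \<in> sets borel" "B \<subseteq> Rp2" for B
      using evolution \<zeta>0 k t that by auto
    show "emeasure lborel ({0..T} \<inter> (\<lambda>s. w s + s) -` ball c \<kappa>) \<le> ennreal \<delta>" for c
      using small[of \<nu> c] wF by (simp add: \<MM>_def \<nu>_def emeasure_distr_restrict_lborel)
  qed (use \<zeta>M2 \<theta>M2 service_dist_atomless Gam w small k t p \<delta> lam_pos in \<open>auto simp: M2_def \<MM>_def less_imp_le\<close>)
  then show ?thesis
    using \<kappa>(1) by blast
qed

theorem lemma4p1:
  fixes K :: nat and lam mu :: "nat \<Rightarrow> real" and \<Gamma> :: "nat \<Rightarrow> real measure"
    and \<theta> :: "nat \<Rightarrow> (real \<times> real) measure"
    and \<zeta> :: "real \<Rightarrow> nat \<Rightarrow> (real \<times> real) measure"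
  assumes K: "K \<ge> 1"
    and lam_pos: "\<forall>k\<in>{1..K}. lam k > 0"
    and mu_pos: "\<forall>k\<in>{1..K}. mu k > 0"
    and rho: "(\<Sum>k\<in>{1..K}. lam k / mu k) > 1"
    and Gam: "\<forall>k\<in>{1..K}. service_dist (\<Gamma> k)"
    and init: "Iset K \<Gamma> \<theta>"
    and sol: "fluid_sol K lam mu \<Gamma> \<theta> \<zeta>"
    and T: "T > 0" and eps: "\<epsilon> > 0"
  shows "\<exists>\<kappa>>0. Max ((\<lambda>k. SUP t\<in>{0..T}. SUP p\<in>Rp2.
            emeasure (\<zeta> t k) (enlarge (shift Cset p) \<kappa>)) ` {1..K}) < ennreal \<epsilon>"
proof -
  define \<Lambda> where "\<Lambda> = (\<Sum>k\<in>{1..K}. lam k)"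
  define \<delta> where "\<delta> = \<epsilon> / (3 + \<Lambda> * (1 + T))"
  have \<Lambda>: "0 \<le> \<Lambda>" "\<And>k. k \<in> {1..K} \<Longrightarrow> lam k \<le> \<Lambda>"
    using lam_pos unfolding \<Lambda>_def by (auto intro: sum_nonneg less_imp_le intro!: member_le_sum)
  have denom: "0 < 3 + \<Lambda> * (1 + T)"
    using \<Lambda>(1) T by (simp add: add_pos_nonneg)
  have \<delta>: "0 < \<delta>"
    using eps denom by (simp add: \<delta>_def)
  obtain \<kappa> where "\<kappa> > 0" and \<kappa>: "\<And>k t p. k \<in> {1..K} \<Longrightarrow> t \<in> {0..T} \<Longrightarrow> p \<in> Rp2 \<Longrightarrow>
      emeasure (\<zeta> t k) (enlarge (shift Cset p) \<kappa>) \<le> ennreal (2 * \<delta> + lam k * (\<delta> + \<delta> * T))"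
    using fluid_sol_enlarged_corner_uniformly_small[OF lam_pos mu_pos Gam init sol less_imp_le[OF T] \<delta>]
    by blast
  have "emeasure (\<zeta> t k) (enlarge (shift Cset p) \<kappa>) \<le> ennreal (2 * \<delta> + \<Lambda> * (\<delta> + \<delta> * T))"
    if "k \<in> {1..K}" "t \<in> {0..T}" "p \<in> Rp2" for k t p
  proof -
    have "2 * \<delta> + lam k * (\<delta> + \<delta> * T) \<le> 2 * \<delta> + \<Lambda> * (\<delta> + \<delta> * T)"
      using \<Lambda>(2)[OF that(1)] \<delta> T by (intro add_left_mono mult_right_mono) auto
    then show ?thesis
      using \<kappa>[OF that] by (meson ennreal_leI order.trans)
  qed
  then have "Max ((\<lambda>k. SUP t\<in>{0..T}. SUP p\<in>Rp2.
      emeasure (\<zeta> t k) (enlarge (shift Cset p) \<kappa>)) ` {1..K}) \<le> ennreal (2 * \<delta> + \<Lambda> * (\<delta> + \<delta> * T))"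
    using K by (subst Max_le_iff) (auto intro!: SUP_least)
  also have "\<dots> < ennreal \<epsilon>"
  proof (rule ennreal_lessI[OF eps])
    have "2 * \<delta> + \<Lambda> * (\<delta> + \<delta> * T) < \<delta> * (3 + \<Lambda> * (1 + T))"
      using \<delta> by (simp add: algebra_simps)
    also have "\<dots> = \<epsilon>"
      using denom by (simp add: \<delta>_def)
    finally show "2 * \<delta> + \<Lambda> * (\<delta> + \<delta> * T) < \<epsilon>" .
  qed
  finally show ?thesis
    using \<open>\<kappa> > 0\<close> by blast
qed

end
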